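(* Let $\mathcal{X}$ and $\mathcal{Z}$ be subsets of a common normed space (norm $\|\cdot\|$), let $\mathbf{x}\in\mathcal{X}$, and let $q(\cdot\mid\cdot)$ be an $\varepsilon$-LDP mechanism from $\mathcal{X}$ to $\mathcal{Z}$. Let $p$ be a reference distribution on $\mathcal{Z}$ such that $|\ln(q(\mathbf{z}\mid\mathbf{x})/p(\mathbf{z}))|\le\varepsilon$ for all $\mathbf{x}\in\mathcal{X}$, $\mathbf{z}\in\mathcal{Z}$. Let $c\ge 0$ be a constant and let the number of candidates be $N=2^{(\log e+4c)\varepsilon}$. Then, with probability at least $1-2\alpha$ over the draw of the candidates $\mathbf{z}_1,\dots,\mathbf{z}_N$, \[ \Big|\mathbb{E}_{q^{\mathrm{mrc}}}\big[\|\mathbf{z}-\mathbf{x}\|^2\big]-\mathbb{E}_{q}\big[\|\mathbf{z}-\mathbf{x}\|^2\big]\Big|\le\frac{2\alpha\sqrt{\mathbb{E}_{q}[\|\mathbf{z}-\mathbf{x}\|^4]}}{1-\alpha}, \qquad \alpha=\sqrt{2^{-c\varepsilon}+2^{-c^2/\log e+1}}, \] where $\mathbb{E}_q$ is over $\mathbf{z}\sim q(\cdot\mid\mathbf{x})$ and $\mathbb{E}_{q^{\mathrm{mrc}}}$ is over $\mathbf{z}\sim q^{\mathrm{mrc}}(\cdot\mid\mathbf{x})$ for the given candidates.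
   Context: $\log$ denotes the base-2 logarithm and $\ln$ the natural logarithm. A mechanism $q$ maps $\mathbf{x}\in\mathcal{X}$ to a random $\mathbf{z}\in\mathcal{Z}$ with conditional density (or probability mass function) $q(\mathbf{z}\mid\mathbf{x})$; it is $\varepsilon$-LDP if $q(\mathbf{z}\mid\mathbf{x})\le e^{\varepsilon}q(\mathbf{z}\mid\mathbf{x}')$ for all $\mathbf{x},\mathbf{x}'\in\mathcal{X}$, $\mathbf{z}\in\mathcal{Z}$. Minimal Random Coding (MRC): given $q$, a reference distribution $p$ on $\mathcal{Z}$ (density w.r.t. the same base measure) and an integer $N\ge1$, draw candidates $\mathbf{z}_1,\dots,\mathbf{z}_N$ i.i.d. from $p$ (shared randomness, independent of $\mathbf{x}$), set weights $w(k)=q(\mathbf{z}_k\mid\mathbf{x})/p(\mathbf{z}_k)$ and $\pi^{\mathrm{mrc}}_{\mathbf{x}}(k)=w(k)/\sum_{k'=1}^N w(k')$ for $k\in[N]$. The user sends $K\sim\pi^{\mathrm{mrc}}_{\mathbf{x}}$, and $q^{\mathrm{mrc}}(\cdot\mid\mathbf{x})=\sum_{k}\pi^{\mathrm{mrc}}_{\mathbf{x}}(k)\,\delta_{\mathbf{z}_k}$ is the distribution of $\mathbf{z}_K$. *)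

theory Defs
  imports "HOL-Probability.Probability"
begin

text \<open>Conventions: a mechanism is a function q with q x z = q(z | x), a density in z
  w.r.t. a base measure M whose space is the output set Z.\<close>

definition eps_LDP :: "real \<Rightarrow> 'x set \<Rightarrow> 'z set \<Rightarrow> ('x \<Rightarrow> 'z \<Rightarrow> real) \<Rightarrow> bool" where
  "eps_LDP \<epsilon> X Z q \<longleftrightarrow>
     (\<forall>x\<in>X. \<forall>x'\<in>X. \<forall>z\<in>Z. q x z \<le> exp \<epsilon> * q x' z)"

definition mrc_weight :: "('x \<Rightarrow> 'z \<Rightarrow> real) \<Rightarrow> ('z \<Rightarrow> real) \<Rightarrow> 'x \<Rightarrow> (nat \<Rightarrow> 'z) \<Rightarrow> nat \<Rightarrow> real" where
  "mrc_weight q p x zs k = q x (zs k) / p (zs k)"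

text \<open>MRC selection distribution pi_x^mrc(k), k in [N] (indexed 0..N-1).\<close>
definition mrc_pi :: "nat \<Rightarrow> ('x \<Rightarrow> 'z \<Rightarrow> real) \<Rightarrow> ('z \<Rightarrow> real) \<Rightarrow> 'x \<Rightarrow> (nat \<Rightarrow> 'z) \<Rightarrow> nat \<Rightarrow> real" where
  "mrc_pi N q p x zs k = mrc_weight q p x zs k / (\<Sum>k'<N. mrc_weight q p x zs k')"

definition mrc_expect :: "nat \<Rightarrow> ('x \<Rightarrow> 'z \<Rightarrow> real) \<Rightarrow> ('z \<Rightarrow> real) \<Rightarrow> 'x \<Rightarrow> (nat \<Rightarrow> 'z) \<Rightarrow> ('z \<Rightarrow> real) \<Rightarrow> real" where
  "mrc_expect N q p x zs f = (\<Sum>k<N. mrc_pi N q p x zs k * f (zs k))"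

definition mech_expect :: "'z measure \<Rightarrow> ('x \<Rightarrow> 'z \<Rightarrow> real) \<Rightarrow> 'x \<Rightarrow> ('z \<Rightarrow> real) \<Rightarrow> real" where
  "mech_expect M q x f = (\<integral>z. f z * q x z \<partial>M)"

definition candidates :: "nat \<Rightarrow> 'z measure \<Rightarrow> ('z \<Rightarrow> real) \<Rightarrow> (nat \<Rightarrow> 'z) measure" where
  "candidates N M p = PiM {..<N} (\<lambda>_. density M (\<lambda>z. ennreal (p z)))"

end

theory Submission
  imports Defs
begin

(* Under the candidate law p the importance weights w = q(.|x) / p lie in [0, exp eps], so for
   any f the products w(z_k) f(z_k) are i.i.d. with mean E_q f and second moment at most
   exp eps * E_q f^2.  By Chebyshev's inequality, Sum_k w(z_k) deviates from N by more than N alpha,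
   and Sum_k w(z_k) f(z_k) from N E_q f by more than N alpha sqrt (E_q f^2), each with probability
   at most exp eps / (N alpha^2) <= alpha.  Outside both events the self-normalised MRC estimate
   Sum w f / Sum w is within 2 alpha sqrt (E_q f^2) / (1 - alpha) of E_q f; take f = norm (z - x)^2. *)

lemma
  assumes P: "prob_space P" and k: "k \<in> I" and g: "integrable P (g :: 'a \<Rightarrow> real)"
  shows integrable_PiM_coordinate: "integrable (PiM I (\<lambda>_. P)) (\<lambda>\<omega>. g (\<omega> k))"
    and integral_PiM_coordinate: "(\<integral>\<omega>. g (\<omega> k) \<partial>PiM I (\<lambda>_. P)) = integral\<^sup>L P g"
proof -
  have component: "distr (PiM I (\<lambda>_. P)) P (\<lambda>\<omega>. \<omega> k) = P"
    using distr_PiM_component[of I "\<lambda>_. P" k] P k by simp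
  have [measurable]: "g \<in> borel_measurable P" "(\<lambda>\<omega>. \<omega> k) \<in> measurable (PiM I (\<lambda>_. P)) P"
    using g k by auto
  show "integrable (PiM I (\<lambda>_. P)) (\<lambda>\<omega>. g (\<omega> k))"
    using integrable_distr_eq[of "\<lambda>\<omega>. \<omega> k" "PiM I (\<lambda>_. P)" P g] g by (simp add: component)
  show "(\<integral>\<omega>. g (\<omega> k) \<partial>PiM I (\<lambda>_. P)) = integral\<^sup>L P g"
    using integral_distr[of "\<lambda>\<omega>. \<omega> k" "PiM I (\<lambda>_. P)" P g] by (simp add: component)
qed

lemma
  assumes P: "prob_space P" and I: "finite I" "k \<in> I" "l \<in> I" "k \<noteq> l"
    and g: "integrable P (g :: 'a \<Rightarrow> real)" and h: "integrable P h"
  shows integrable_PiM_coordinate_pair: "integrable (PiM I (\<lambda>_. P)) (\<lambda>\<omega>. g (\<omega> k) * h (\<omega> l))"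
    and integral_PiM_coordinate_pair:
      "(\<integral>\<omega>. g (\<omega> k) * h (\<omega> l) \<partial>PiM I (\<lambda>_. P)) = integral\<^sup>L P g * integral\<^sup>L P h"
proof -
  interpret product_prob_space "\<lambda>_. P" I
    by (intro product_prob_spaceI) (simp add: P)
  define f where "f i = (if i = k then g else if i = l then h else (\<lambda>_. 1))" for i
  have f: "integrable P (f i)" for i
    using g h by (simp add: f_def)
  have prod_split: "(\<Prod>i\<in>I. F i) = F k * F l * (\<Prod>i\<in>I - {k} - {l}. F i)" for F :: "'b \<Rightarrow> real"
    using I by (simp add: prod.remove[of I k] prod.remove[of "I - {k}" l] mult.assoc)
  have prod_f: "(\<Prod>i\<in>I. f i (\<omega> i)) = g (\<omega> k) * h (\<omega> l)" for \<omega>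
    using I by (simp add: prod_split f_def)
  have "(\<Prod>i\<in>I. integral\<^sup>L P (f i)) = integral\<^sup>L P g * integral\<^sup>L P h"
    using I by (simp add: prod_split f_def M.prob_space)
  moreover have "integrable (PiM I (\<lambda>_. P)) (\<lambda>\<omega>. \<Prod>i\<in>I. f i (\<omega> i))"
    and "(\<integral>\<omega>. (\<Prod>i\<in>I. f i (\<omega> i)) \<partial>PiM I (\<lambda>_. P)) = (\<Prod>i\<in>I. integral\<^sup>L P (f i))"
    by (intro product_integrable_prod product_integral_prod I(1) f)+
  ultimately show "integrable (PiM I (\<lambda>_. P)) (\<lambda>\<omega>. g (\<omega> k) * h (\<omega> l))"
    and "(\<integral>\<omega>. g (\<omega> k) * h (\<omega> l) \<partial>PiM I (\<lambda>_. P)) = integral\<^sup>L P g * integral\<^sup>L P h"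
    by (simp_all add: prod_f)
qed

lemma
  fixes Y :: "'a \<Rightarrow> real"
  assumes P: "prob_space P" and I: "finite I" and Y[measurable]: "Y \<in> borel_measurable P"
    and Y2: "integrable P (\<lambda>z. (Y z)\<^sup>2)" and mean_zero: "integral\<^sup>L P Y = 0"
  shows integrable_PiM_sum_square:
      "integrable (PiM I (\<lambda>_. P)) (\<lambda>\<omega>. (\<Sum>i\<in>I. Y (\<omega> i))\<^sup>2)"
    and integral_PiM_sum_square:
      "(\<integral>\<omega>. (\<Sum>i\<in>I. Y (\<omega> i))\<^sup>2 \<partial>PiM I (\<lambda>_. P)) = card I * (\<integral>z. (Y z)\<^sup>2 \<partial>P)"
proof -
  let ?Q = "PiM I (\<lambda>_. P)"
  have Y1: "integrable P Y"
    using finite_measure.square_integrable_imp_integrable[OF prob_space.finite_measure[OF P] Y Y2] .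
  have moment: "integrable ?Q (\<lambda>\<omega>. Y (\<omega> i) * Y (\<omega> j)) \<and>
      (\<integral>\<omega>. Y (\<omega> i) * Y (\<omega> j) \<partial>?Q) = (if i = j then \<integral>z. (Y z)\<^sup>2 \<partial>P else 0)"
    if "i \<in> I" "j \<in> I" for i j
  proof (cases "i = j")
    case True
    then show ?thesis
      using integrable_PiM_coordinate[OF P \<open>i \<in> I\<close> Y2] integral_PiM_coordinate[OF P \<open>i \<in> I\<close> Y2]
      by (simp add: power2_eq_square)
  next
    case False
    then show ?thesis
      using integrable_PiM_coordinate_pair[OF P I that False Y1 Y1]
        integral_PiM_coordinate_pair[OF P I that False Y1 Y1] mean_zero
      by simp
  qed
  have square: "(\<Sum>i\<in>I. Y (\<omega> i))\<^sup>2 = (\<Sum>i\<in>I. \<Sum>j\<in>I. Y (\<omega> i) * Y (\<omega> j))" for \<omega>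
    by (simp add: power2_eq_square sum_product)
  show "integrable ?Q (\<lambda>\<omega>. (\<Sum>i\<in>I. Y (\<omega> i))\<^sup>2)"
    unfolding square using moment by (intro Bochner_Integration.integrable_sum) blast
  have "(\<integral>\<omega>. (\<Sum>i\<in>I. Y (\<omega> i))\<^sup>2 \<partial>?Q) = (\<Sum>i\<in>I. \<Sum>j\<in>I. \<integral>\<omega>. Y (\<omega> i) * Y (\<omega> j) \<partial>?Q)"
    unfolding square using moment
    by (subst Bochner_Integration.integral_sum)
       (auto intro!: Bochner_Integration.integrable_sum sum.cong Bochner_Integration.integral_sum)
  also have "\<dots> = (\<Sum>i\<in>I. \<Sum>j\<in>I. if i = j then \<integral>z. (Y z)\<^sup>2 \<partial>P else 0)"
    using moment by (intro sum.cong) auto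
  finally show "(\<integral>\<omega>. (\<Sum>i\<in>I. Y (\<omega> i))\<^sup>2 \<partial>?Q) = card I * (\<integral>z. (Y z)\<^sup>2 \<partial>P)"
    using I by simp
qed

(* Unlike Chebyshev_inequality this allows t = 0, the case E_q f^2 = 0 of the application. *)
lemma (in prob_space) prob_abs_gt_le_of_second_moment:
  fixes S :: "'a \<Rightarrow> real"
  assumes [measurable]: "S \<in> borel_measurable M" and S2: "integrable M (\<lambda>\<omega>. (S \<omega>)\<^sup>2)"
    and moment: "expectation (\<lambda>\<omega>. (S \<omega>)\<^sup>2) \<le> t\<^sup>2 * \<beta>" and "0 \<le> t" "0 \<le> \<beta>"
  shows "prob {\<omega> \<in> space M. t < \<bar>S \<omega>\<bar>} \<le> \<beta>"
proof (cases "t = 0")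
  case True
  with moment have "expectation (\<lambda>\<omega>. (S \<omega>)\<^sup>2) = 0"
    by (intro antisym integral_nonneg_AE) auto
  then have "AE \<omega> in M. (S \<omega>)\<^sup>2 = 0"
    using integral_nonneg_eq_0_iff_AE[OF S2] by simp
  then have "prob {\<omega> \<in> space M. t < \<bar>S \<omega>\<bar>} = 0"
    using True by (subst prob_eq_0) (auto elim!: AE_mp)
  then show ?thesis
    using \<open>0 \<le> \<beta>\<close> by simp
next
  case False
  with \<open>0 \<le> t\<close> have t: "0 < t\<^sup>2"
    by simp
  have "prob {\<omega> \<in> space M. t < \<bar>S \<omega>\<bar>} \<le> prob {\<omega> \<in> space M. t\<^sup>2 \<le> (S \<omega>)\<^sup>2}"
    using \<open>0 \<le> t\<close> by (intro finite_measure_mono) (auto simp: abs_le_square_iff[symmetric])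
  also have "\<dots> \<le> expectation (\<lambda>\<omega>. (S \<omega>)\<^sup>2) / t\<^sup>2"
    by (rule integral_Markov_inequality_measure[OF S2 sets.top _ t]) simp
  also have "\<dots> \<le> \<beta>"
    using moment t by (simp add: divide_le_eq mult.commute)
  finally show ?thesis .
qed

lemma (in prob_space) prob_ge_1_minus_union_bound:
  assumes "A \<in> events" "B \<in> events" "G \<in> events" and "space M - A - B \<subseteq> G"
  shows "1 - (prob A + prob B) \<le> prob G"
proof -
  have "1 - prob G = prob (space M - G)"
    using prob_compl[OF \<open>G \<in> events\<close>] by simp
  also have "\<dots> \<le> prob (A \<union> B)"
    using assms by (intro finite_measure_mono) auto
  also have "\<dots> \<le> prob A + prob B"
    using assms by (intro measure_Un_le) auto
  finally show ?thesis
    by simp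
qed

lemma ratio_estimate_error_le:
  fixes n \<alpha> s I W S :: real
  assumes n: "0 < n" and \<alpha>: "0 \<le> \<alpha>" "\<alpha> < 1" and I: "\<bar>I\<bar> \<le> s"
    and W: "\<bar>W - n\<bar> \<le> n * \<alpha>" and S: "\<bar>S - n * I\<bar> \<le> n * s * \<alpha>"
  shows "\<bar>S / W - I\<bar> \<le> 2 * \<alpha> * s / (1 - \<alpha>)"
proof -
  have W_lower: "n * (1 - \<alpha>) \<le> W"
    using W by (simp add: algebra_simps abs_le_iff)
  have W_pos: "0 < W"
    using n \<alpha> by (intro less_le_trans[OF _ W_lower]) simp
  have "\<bar>S - I * W\<bar> = \<bar>(S - n * I) - I * (W - n)\<bar>"
    by (simp add: algebra_simps)
  also have "\<dots> \<le> \<bar>S - n * I\<bar> + \<bar>I\<bar> * \<bar>W - n\<bar>"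
    by (metis abs_triangle_ineq4 abs_mult)
  also have "\<dots> \<le> n * s * \<alpha> + s * (n * \<alpha>)"
    using S W I by (intro add_mono mult_mono) auto
  finally have numerator: "\<bar>S - I * W\<bar> \<le> 2 * \<alpha> * s * n"
    by (simp add: algebra_simps)
  have "\<bar>S / W - I\<bar> = \<bar>S - I * W\<bar> / W"
    using W_pos by (simp add: field_simps)
  also have "\<dots> \<le> 2 * \<alpha> * s * n / (n * (1 - \<alpha>))"
    using numerator W_lower W_pos n \<alpha> I
    by (intro frac_le mult_pos_pos) auto
  also have "\<dots> = 2 * \<alpha> * s / (1 - \<alpha>)"
    using n by simp
  finally show ?thesis .
qed

(* P (below) is the law of one MRC candidate and q z / p z its weight mrc_weight. *)
locale importance_sampling =
  fixes M :: "'a measure" and p q :: "'a \<Rightarrow> real" and \<epsilon> :: real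
  assumes p_measurable[measurable]: "p \<in> borel_measurable M"
    and q_measurable[measurable]: "q \<in> borel_measurable M"
    and p_pos: "\<And>z. z \<in> space M \<Longrightarrow> 0 < p z"
    and q_nonneg: "\<And>z. z \<in> space M \<Longrightarrow> 0 \<le> q z"
    and p_density: "(\<integral>\<^sup>+ z. ennreal (p z) \<partial>M) = 1"
    and q_density: "(\<integral>\<^sup>+ z. ennreal (q z) \<partial>M) = 1"
    and weight_le: "\<And>z. z \<in> space M \<Longrightarrow> q z / p z \<le> exp \<epsilon>"
begin

abbreviation P :: "'a measure" where
  "P \<equiv> density M (\<lambda>z. ennreal (p z))"

sublocale P: prob_space P
  by (rule prob_spaceI) (simp add: emeasure_density p_density)

lemma integrable_q: "integrable M q"
  and integral_q: "integral\<^sup>L M q = 1"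
  using q_density q_nonneg
  by (auto intro!: integrableI_nn_integral_finite[where x = 1] simp: integral_eq_nn_integral)

lemma
  fixes g :: "'a \<Rightarrow> real"
  assumes [measurable]: "g \<in> borel_measurable M"
  shows integrable_weighted_iff:
      "integrable P (\<lambda>z. q z / p z * g z) \<longleftrightarrow> integrable M (\<lambda>z. g z * q z)"
    and integral_weighted: "(\<integral>z. q z / p z * g z \<partial>P) = (\<integral>z. g z * q z \<partial>M)"
proof -
  have cancel: "p z * (q z / p z * g z) = g z * q z" if "z \<in> space M" for z
    using p_pos[OF that] by simp
  have p_nonneg: "AE z in M. 0 \<le> p z"
    using p_pos by (auto intro: less_imp_le)
  have "integrable P (\<lambda>z. q z / p z * g z) \<longleftrightarrow> integrable M (\<lambda>z. p z * (q z / p z * g z))"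
    using integrable_density[OF _ _ p_nonneg, of "\<lambda>z. q z / p z * g z"] by simp
  also have "\<dots> \<longleftrightarrow> integrable M (\<lambda>z. g z * q z)"
    by (intro Bochner_Integration.integrable_cong refl) (rule cancel)
  finally show "integrable P (\<lambda>z. q z / p z * g z) \<longleftrightarrow> integrable M (\<lambda>z. g z * q z)" .
  have "(\<integral>z. q z / p z * g z \<partial>P) = (\<integral>z. p z * (q z / p z * g z) \<partial>M)"
    using integral_density[OF _ _ p_nonneg, of "\<lambda>z. q z / p z * g z"] by simp
  also have "\<dots> = (\<integral>z. g z * q z \<partial>M)"
    by (intro Bochner_Integration.integral_cong refl) (rule cancel)
  finally show "(\<integral>z. q z / p z * g z \<partial>P) = (\<integral>z. g z * q z \<partial>M)" .
qed

lemma
  fixes f :: "'a \<Rightarrow> real"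
  assumes [measurable]: "f \<in> borel_measurable M" and f2: "integrable M (\<lambda>z. (f z)\<^sup>2 * q z)"
  shows integrable_weighted_square: "integrable P (\<lambda>z. (q z / p z * f z)\<^sup>2)"
    and integral_weighted_square_le:
      "(\<integral>z. (q z / p z * f z)\<^sup>2 \<partial>P) \<le> exp \<epsilon> * (\<integral>z. (f z)\<^sup>2 * q z \<partial>M)"
proof -
  have bound: "(q z / p z * f z)\<^sup>2 \<le> exp \<epsilon> * (q z / p z * (f z)\<^sup>2)" if "z \<in> space P" for z
  proof -
    have z: "z \<in> space M"
      using that by simp
    have "(q z / p z * f z)\<^sup>2 = q z / p z * (q z / p z * (f z)\<^sup>2)"
      by (simp add: power2_eq_square)
    also have "\<dots> \<le> exp \<epsilon> * (q z / p z * (f z)\<^sup>2)"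
      using weight_le[OF z] q_nonneg[OF z] p_pos[OF z] by (intro mult_right_mono) auto
    finally show ?thesis .
  qed
  have dominant: "integrable P (\<lambda>z. exp \<epsilon> * (q z / p z * (f z)\<^sup>2))"
    using f2 integrable_weighted_iff[of "\<lambda>z. (f z)\<^sup>2"] by (intro integrable_mult_right) simp
  show "integrable P (\<lambda>z. (q z / p z * f z)\<^sup>2)"
    using bound by (intro Bochner_Integration.integrable_bound[OF dominant] AE_I2)
      (simp_all only: real_norm_def abs_power2 order_trans[OF _ abs_ge_self], measurable)
  then have "(\<integral>z. (q z / p z * f z)\<^sup>2 \<partial>P) \<le> (\<integral>z. exp \<epsilon> * (q z / p z * (f z)\<^sup>2) \<partial>P)"
    using bound dominant by (intro integral_mono) auto
  also have "\<dots> = exp \<epsilon> * (\<integral>z. q z / p z * (f z)\<^sup>2 \<partial>P)"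
    by (rule integral_mult_right_zero)
  also have "\<dots> = exp \<epsilon> * (\<integral>z. (f z)\<^sup>2 * q z \<partial>M)"
    by (subst integral_weighted) simp_all
  finally show "(\<integral>z. (q z / p z * f z)\<^sup>2 \<partial>P) \<le> exp \<epsilon> * (\<integral>z. (f z)\<^sup>2 * q z \<partial>M)" .
qed

lemma integrable_mult_q:
  fixes f :: "'a \<Rightarrow> real"
  assumes [measurable]: "f \<in> borel_measurable M" and f2: "integrable M (\<lambda>z. (f z)\<^sup>2 * q z)"
  shows "integrable M (\<lambda>z. f z * q z)"
  using P.square_integrable_imp_integrable[OF _ integrable_weighted_square[OF _ f2]]
    integrable_weighted_iff[of f]
  by simp

lemma square_integral_le:
  fixes f :: "'a \<Rightarrow> real"
  assumes [measurable]: "f \<in> borel_measurable M" and f2: "integrable M (\<lambda>z. (f z)\<^sup>2 * q z)"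
  shows "(\<integral>z. f z * q z \<partial>M)\<^sup>2 \<le> (\<integral>z. (f z)\<^sup>2 * q z \<partial>M)"
proof -
  define I where "I = (\<integral>z. f z * q z \<partial>M)"
  have "0 \<le> (\<integral>z. (f z - I)\<^sup>2 * q z \<partial>M)"
    using q_nonneg by (intro integral_nonneg_AE AE_I2) simp
  also have "\<dots> = (\<integral>z. (f z)\<^sup>2 * q z - 2 * I * (f z * q z) + I\<^sup>2 * q z \<partial>M)"
    by (intro Bochner_Integration.integral_cong) (simp_all add: power2_eq_square algebra_simps)
  also have "\<dots> = (\<integral>z. (f z)\<^sup>2 * q z \<partial>M) - I\<^sup>2"
    using f2 integrable_mult_q[OF _ f2] integrable_q
    by (simp add: integral_q I_def power2_eq_square)
  finally show ?thesis
    by (simp add: I_def)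
qed

lemma
  fixes f :: "'a \<Rightarrow> real"
  assumes [measurable]: "f \<in> borel_measurable M" and f2: "integrable M (\<lambda>z. (f z)\<^sup>2 * q z)"
  defines "Y \<equiv> \<lambda>z. q z / p z * f z - (\<integral>z. f z * q z \<partial>M)"
  shows integral_centered_weighted: "integral\<^sup>L P Y = 0"
    and integrable_centered_weighted_square: "integrable P (\<lambda>z. (Y z)\<^sup>2)"
    and integral_centered_weighted_square_le:
      "(\<integral>z. (Y z)\<^sup>2 \<partial>P) \<le> exp \<epsilon> * (\<integral>z. (f z)\<^sup>2 * q z \<partial>M)"
proof -
  define I where "I = (\<integral>z. f z * q z \<partial>M)"
  have fw2: "integrable P (\<lambda>z. (q z / p z * f z)\<^sup>2)"
    using integrable_weighted_square[OF _ f2] by simp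
  have fw: "integrable P (\<lambda>z. q z / p z * f z)"
    using P.square_integrable_imp_integrable[OF _ fw2] by simp
  have mean: "(\<integral>z. q z / p z * f z \<partial>P) = I"
    by (subst integral_weighted) (simp_all add: I_def)
  have expand: "(Y z)\<^sup>2 = (q z / p z * f z)\<^sup>2 - 2 * I * (q z / p z * f z) + I\<^sup>2" for z
    by (simp add: Y_def I_def power2_diff)
  have "integral\<^sup>L P Y = (\<integral>z. q z / p z * f z \<partial>P) - (\<integral>z. I \<partial>P)"
    unfolding Y_def I_def[symmetric] using fw by (rule Bochner_Integration.integral_diff) simp
  then show "integral\<^sup>L P Y = 0"
    using mean by (simp add: P.prob_space[simplified])
  show "integrable P (\<lambda>z. (Y z)\<^sup>2)"
    unfolding expand
    by (intro Bochner_Integration.integrable_add Bochner_Integration.integrable_diff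
        integrable_mult_right fw fw2 P.integrable_const)
  have "(\<integral>z. (Y z)\<^sup>2 \<partial>P) = P.variance (\<lambda>z. q z / p z * f z)"
    unfolding Y_def I_def[symmetric] mean[symmetric] ..
  also have "\<dots> = (\<integral>z. (q z / p z * f z)\<^sup>2 \<partial>P) - I\<^sup>2"
    unfolding mean[symmetric] by (rule P.variance_eq[OF fw fw2])
  also have "\<dots> \<le> (\<integral>z. (q z / p z * f z)\<^sup>2 \<partial>P)"
    by simp
  also have "\<dots> \<le> exp \<epsilon> * (\<integral>z. (f z)\<^sup>2 * q z \<partial>M)"
    using integral_weighted_square_le[OF _ f2] by simp
  finally show "(\<integral>z. (Y z)\<^sup>2 \<partial>P) \<le> exp \<epsilon> * (\<integral>z. (f z)\<^sup>2 * q z \<partial>M)" .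
qed

lemma weighted_sum_deviation_prob_le:
  fixes f :: "'a \<Rightarrow> real"
  assumes [measurable]: "f \<in> borel_measurable M" and f2: "integrable M (\<lambda>z. (f z)\<^sup>2 * q z)"
    and "0 < N" "0 < \<alpha>"
  shows "measure (PiM {..<N} (\<lambda>_. P))
      {\<omega> \<in> space (PiM {..<N} (\<lambda>_. P)). real N * sqrt (\<integral>z. (f z)\<^sup>2 * q z \<partial>M) * \<alpha>
         < \<bar>(\<Sum>k<N. q (\<omega> k) / p (\<omega> k) * f (\<omega> k)) - real N * (\<integral>z. f z * q z \<partial>M)\<bar>}
    \<le> exp \<epsilon> / (real N * \<alpha>\<^sup>2)"
proof -
  let ?Q = "PiM {..<N} (\<lambda>_. P)"
  interpret Q: prob_space ?Q
    by (intro prob_space_PiM P.prob_space_axioms)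
  define Y where "Y z = q z / p z * f z - (\<integral>z. f z * q z \<partial>M)" for z
  define s where "s = sqrt (\<integral>z. (f z)\<^sup>2 * q z \<partial>M)"
  have [measurable]: "Y \<in> borel_measurable P"
    unfolding Y_def[abs_def] by measurable
  have s_nonneg: "0 \<le> s"
    using q_nonneg by (simp add: s_def integral_nonneg_AE)
  have s_square: "s\<^sup>2 = (\<integral>z. (f z)\<^sup>2 * q z \<partial>M)"
    using q_nonneg by (simp add: s_def integral_nonneg_AE)
  have sum_Y: "(\<Sum>k<N. Y (\<omega> k)) = (\<Sum>k<N. q (\<omega> k) / p (\<omega> k) * f (\<omega> k)) - real N * (\<integral>z. f z * q z \<partial>M)" for \<omega>
    by (simp add: Y_def sum_subtractf)
  note Y_moments = integral_centered_weighted[OF _ f2] integrable_centered_weighted_square[OF _ f2]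
    integral_centered_weighted_square_le[OF _ f2]
  have "(\<integral>\<omega>. (\<Sum>k<N. Y (\<omega> k))\<^sup>2 \<partial>?Q) = real N * (\<integral>z. (Y z)\<^sup>2 \<partial>P)"
    using integral_PiM_sum_square[OF P.prob_space_axioms _ _ Y_moments(2,1)[folded Y_def], of "{..<N}"]
    by simp
  also have "\<dots> \<le> real N * (exp \<epsilon> * s\<^sup>2)"
    using Y_moments(3)[folded Y_def] by (simp add: s_square mult_left_mono)
  also have "\<dots> = (real N * s * \<alpha>)\<^sup>2 * (exp \<epsilon> / (real N * \<alpha>\<^sup>2))"
    using \<open>0 < N\<close> \<open>0 < \<alpha>\<close> by (simp add: field_simps power2_eq_square)
  finally have "Q.prob {\<omega> \<in> space ?Q. real N * s * \<alpha> < \<bar>\<Sum>k<N. Y (\<omega> k)\<bar>} \<le> exp \<epsilon> / (real N * \<alpha>\<^sup>2)"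
    using integrable_PiM_sum_square[OF P.prob_space_axioms _ _ Y_moments(2,1)[folded Y_def]]
      s_nonneg \<open>0 < \<alpha>\<close>
    by (intro Q.prob_abs_gt_le_of_second_moment) auto
  then show ?thesis
    by (simp add: sum_Y s_def)
qed

lemma self_normalized_estimate_prob_ge:
  fixes f :: "'a \<Rightarrow> real"
  assumes [measurable]: "f \<in> borel_measurable M" and f2: "integrable M (\<lambda>z. (f z)\<^sup>2 * q z)"
    and N_large: "exp \<epsilon> \<le> real N * \<alpha> ^ 3" and "\<alpha> < 1"
  shows "1 - 2 * \<alpha> \<le> measure (PiM {..<N} (\<lambda>_. P))
      {\<omega> \<in> space (PiM {..<N} (\<lambda>_. P)).
         \<bar>(\<Sum>k<N. q (\<omega> k) / p (\<omega> k) * f (\<omega> k)) / (\<Sum>k<N. q (\<omega> k) / p (\<omega> k))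
           - (\<integral>z. f z * q z \<partial>M)\<bar>
         \<le> 2 * \<alpha> * sqrt (\<integral>z. (f z)\<^sup>2 * q z \<partial>M) / (1 - \<alpha>)}"
    (is "_ \<le> measure ?Q ?good")
proof -
  have "0 < real N * \<alpha> ^ 3"
    using N_large by (rule less_le_trans[OF exp_gt_zero])
  then have N: "0 < N" and \<alpha>: "0 < \<alpha>" "\<alpha> < 1"
    using \<open>\<alpha> < 1\<close> by (auto simp: zero_less_mult_iff zero_less_power_eq)
  have failure_le: "exp \<epsilon> / (real N * \<alpha>\<^sup>2) \<le> \<alpha>"
    using N_large N \<alpha> by (simp add: divide_le_eq power2_eq_square power3_eq_cube mult_ac)
  interpret Q: prob_space ?Q
    by (intro prob_space_PiM P.prob_space_axioms)
  define I where "I = (\<integral>z. f z * q z \<partial>M)"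
  define s where "s = sqrt (\<integral>z. (f z)\<^sup>2 * q z \<partial>M)"
  define W where "W \<omega> = (\<Sum>k<N. q (\<omega> k) / p (\<omega> k))" for \<omega> :: "nat \<Rightarrow> 'a"
  define S where "S \<omega> = (\<Sum>k<N. q (\<omega> k) / p (\<omega> k) * f (\<omega> k))" for \<omega> :: "nat \<Rightarrow> 'a"
  define bad_W where "bad_W = {\<omega> \<in> space ?Q. real N * \<alpha> < \<bar>W \<omega> - real N\<bar>}"
  define bad_S where "bad_S = {\<omega> \<in> space ?Q. real N * s * \<alpha> < \<bar>S \<omega> - real N * I\<bar>}"
  have "Q.prob bad_W \<le> \<alpha>"
    using weighted_sum_deviation_prob_le[of "\<lambda>_. 1", OF _ _ N \<alpha>(1)] integrable_q
    by (simp add: integral_q bad_W_def W_def order_trans[OF _ failure_le])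
  moreover have "Q.prob bad_S \<le> \<alpha>"
    using weighted_sum_deviation_prob_le[OF _ f2 N \<alpha>(1)] failure_le
    by (simp add: bad_S_def S_def I_def s_def)
  moreover have "space ?Q - bad_W - bad_S \<subseteq> ?good"
  proof
    fix \<omega> assume \<omega>: "\<omega> \<in> space ?Q - bad_W - bad_S"
    have "\<bar>I\<bar> \<le> s"
      using real_sqrt_le_mono[OF square_integral_le[OF _ f2]] by (simp add: I_def s_def)
    with \<omega> N \<alpha> have "\<bar>S \<omega> / W \<omega> - I\<bar> \<le> 2 * \<alpha> * s / (1 - \<alpha>)"
      by (intro ratio_estimate_error_le[of "real N"]) (auto simp: bad_W_def bad_S_def)
    with \<omega> show "\<omega> \<in> ?good"
      by (simp add: S_def W_def I_def s_def)
  qed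
  moreover have "bad_W \<in> Q.events" "bad_S \<in> Q.events" "?good \<in> Q.events"
    unfolding bad_W_def bad_S_def W_def S_def by measurable
  ultimately show ?thesis
    using Q.prob_ge_1_minus_union_bound[of bad_W bad_S ?good] by simp
qed

end

lemma importance_samplingI_abs_ln_le:
  assumes "p \<in> borel_measurable M" "q \<in> borel_measurable M"
    and pos: "\<And>z. z \<in> space M \<Longrightarrow> 0 < p z" "\<And>z. z \<in> space M \<Longrightarrow> 0 < q z"
    and "(\<integral>\<^sup>+ z. ennreal (p z) \<partial>M) = 1" "(\<integral>\<^sup>+ z. ennreal (q z) \<partial>M) = 1"
    and ratio: "\<And>z. z \<in> space M \<Longrightarrow> \<bar>ln (q z / p z)\<bar> \<le> \<epsilon>"
  shows "importance_sampling M p q \<epsilon>"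
proof
  fix z assume z: "z \<in> space M"
  have "q z / p z = exp (ln (q z / p z))"
    using pos[OF z] by simp
  also have "\<dots> \<le> exp \<epsilon>"
    using ratio[OF z] by simp
  finally show "q z / p z \<le> exp \<epsilon>" .
qed (use assms in \<open>auto intro: less_imp_le\<close>)

lemma exp_le_candidate_count_mult_cube:
  fixes \<epsilon> c v :: real and N :: nat
  assumes "0 \<le> \<epsilon>" "0 \<le> c" "0 \<le> v"
    and N: "real N = 2 powr ((log 2 (exp 1) + 4 * c) * \<epsilon>)"
  shows "exp \<epsilon> \<le> real N * sqrt (2 powr (- c * \<epsilon>) + v) ^ 3"
proof -
  define u where "u = 2 powr (- c * \<epsilon>)"
  have "1 \<le> 2 powr (c * \<epsilon>)"
    using assms by (intro ge_one_powr_ge_zero) auto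
  then have u: "0 < u" "u \<le> 1"
    by (simp_all add: u_def powr_minus_divide)
  have "real N = 2 powr (log 2 (exp 1) * \<epsilon>) * 2 powr (4 * c * \<epsilon>)"
    unfolding N by (simp add: powr_add[symmetric] algebra_simps)
  also have "2 powr (log 2 (exp 1) * \<epsilon>) = exp \<epsilon>"
    by (simp add: powr_powr[symmetric] powr_def)
  finally have N_eq: "real N = exp \<epsilon> * 2 powr (4 * c * \<epsilon>)" .
  have "2 powr (4 * c * \<epsilon>) * u ^ 4 = 1"
    unfolding u_def by (simp add: powr_realpow[symmetric] powr_powr powr_add[symmetric])
  then have exp_eq: "exp \<epsilon> = real N * u ^ 4"
    by (simp add: N_eq mult.assoc)
  have "u \<le> sqrt (u + v)"
    using u \<open>0 \<le> v\<close> real_sqrt_le_mono[of "u * u" "u + v"]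
    by (simp add: mult_left_le_one_le add_increasing2)
  then have "u ^ 4 \<le> sqrt (u + v) ^ 3"
    using u by (intro order_trans[OF power_decreasing[of 3 4 u]] power_mono) auto
  then show ?thesis
    unfolding exp_eq u_def by (intro mult_left_mono) auto
qed

lemma mrc_expect_eq_ratio:
  "mrc_expect N q p x zs f
     = (\<Sum>k<N. mrc_weight q p x zs k * f (zs k)) / (\<Sum>k<N. mrc_weight q p x zs k)"
  by (simp add: mrc_expect_def mrc_pi_def sum_divide_distrib)

theorem theorem1:
  fixes X Z :: "'a::real_normed_vector set"
    and M :: "'a measure"
    and q :: "'a \<Rightarrow> 'a \<Rightarrow> real"
    and p :: "'a \<Rightarrow> real"
    and x :: 'a
    and \<epsilon> c :: real
    and N :: nat
  assumes M_sets: "sets M = sets (restrict_space borel Z)"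
    and x_in: "x \<in> X"
    and eps_nonneg: "\<epsilon> \<ge> 0"
    and q_meas: "\<And>x'. x' \<in> X \<Longrightarrow> q x' \<in> borel_measurable M"
    and q_pos: "\<And>x' z. x' \<in> X \<Longrightarrow> z \<in> Z \<Longrightarrow> q x' z > 0"
    and q_dens: "\<And>x'. x' \<in> X \<Longrightarrow> (\<integral>\<^sup>+ z. ennreal (q x' z) \<partial>M) = 1"
    and ldp: "eps_LDP \<epsilon> X Z q"
    and p_meas: "p \<in> borel_measurable M"
    and p_pos: "\<And>z. z \<in> Z \<Longrightarrow> p z > 0"
    and p_dens: "(\<integral>\<^sup>+ z. ennreal (p z) \<partial>M) = 1"
    and ratio: "\<And>x' z. x' \<in> X \<Longrightarrow> z \<in> Z \<Longrightarrow> \<bar>ln (q x' z / p z)\<bar> \<le> \<epsilon>"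
    and fourth_moment: "integrable M (\<lambda>z. norm (z - x) ^ 4 * q x z)"
    and c_nonneg: "c \<ge> 0"
    and N_def: "real N = 2 powr ((log 2 (exp 1) + 4 * c) * \<epsilon>)"
  shows "let \<alpha> = sqrt (2 powr (- c * \<epsilon>) + 2 powr (- (c ^ 2) / log 2 (exp 1) + 1))
         in measure (candidates N M p)
              {zs \<in> space (candidates N M p).
                 \<bar>mrc_expect N q p x zs (\<lambda>z. norm (z - x) ^ 2)
                   - mech_expect M q x (\<lambda>z. norm (z - x) ^ 2)\<bar>
                 \<le> 2 * \<alpha> * sqrt (mech_expect M q x (\<lambda>z. norm (z - x) ^ 4)) / (1 - \<alpha>)}
            \<ge> 1 - 2 * \<alpha>"
proof -
  define \<alpha> where "\<alpha> = sqrt (2 powr (- c * \<epsilon>) + 2 powr (- (c ^ 2) / log 2 (exp 1) + 1))"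
  have space_M: "space M = Z"
    using sets_eq_imp_space_eq[OF M_sets] by (simp add: space_restrict_space)
  interpret importance_sampling M p "q x" \<epsilon>
    using p_meas q_meas[OF x_in] p_pos q_pos[OF x_in] p_dens q_dens[OF x_in] ratio[OF x_in]
    by (intro importance_samplingI_abs_ln_le) (auto simp: space_M)
  show ?thesis
  proof (cases "\<alpha> < 1")
    case False
    then show ?thesis
      unfolding \<alpha>_def[symmetric] Let_def by (intro order_trans[OF _ measure_nonneg]) simp
  next
    case True
    have "exp \<epsilon> \<le> real N * \<alpha> ^ 3"
      unfolding \<alpha>_def using eps_nonneg c_nonneg N_def by (intro exp_le_candidate_count_mult_cube) auto
    moreover have [measurable]: "(\<lambda>z. norm (z - x) ^ 2) \<in> borel_measurable M"
      unfolding measurable_cong_sets[OF M_sets refl]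
      by (intro measurable_restrict_space1 borel_measurable_continuous_onI continuous_intros)
    moreover have "integrable M (\<lambda>z. (norm (z - x) ^ 2)\<^sup>2 * q x z)"
      using fourth_moment by (simp add: power_mult[symmetric])
    ultimately show ?thesis
      using self_normalized_estimate_prob_ge[of "\<lambda>z. norm (z - x) ^ 2" N \<alpha>] True
      unfolding Let_def \<alpha>_def[symmetric] candidates_def
      by (simp add: mrc_expect_eq_ratio mrc_weight_def mech_expect_def power_mult[symmetric])
  qed
qed

end
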